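(* Let $\varphi$ be a smooth skew-morphism of a finite group $A$, of order $n$, with power function $\pi:A\to\mathbb{Z}_n$. Then: (i) $\pi$ takes values in the unit group $\mathbb{Z}_n^*$ and is a group homomorphism $A\to\mathbb{Z}_n^*$ whose kernel is $\mathrm{Ker}\,\varphi$; (ii) for any $\varphi$-invariant normal subgroup $N$ of $A$, the induced skew-morphism $\bar\varphi$ of $A/N$ is smooth, and if $N=\mathrm{Ker}\,\varphi$ then $\bar\varphi$ is the identity permutation; (iii) for every positive integer $k$, $\varphi^k$ is a smooth skew-morphism of $A$; (iv) for every automorphism $\gamma$ of $A$, $\gamma^{-1}\varphi\gamma$ is a smooth skew-morphism of $A$.
   Context: A skew-morphism of a finite group $A$ is a permutation $\varphi$ of the set $A$ with $\varphi(1)=1$ for which there exists a function $\pi:A\to\mathbb{Z}_n$, where $n$ is the order of $\varphi$ as a permutation, such that $\varphi(xy)=\varphi(x)\varphi^{\pi(x)}(y)$ for all $x,y\in A$; $\pi$ is the power function. The kernel is $\mathrm{Ker}\,\varphi=\{x\in A:\pi(x)=1\}$, and the core is $\mathrm{Core}\,\varphi=\bigcap_{i=1}^n\varphi^i(\mathrm{Ker}\,\varphi)$, a $\varphi$-invariant normal subgroup. $\varphi$ is smooth if $\varphi(x)\in x\,\mathrm{Core}\,\varphi$ for all $x\in A$. For a $\varphi$-invariant normal subgroup $N$ (i.e. $\varphi(N)=N$), the induced skew-morphism of $A/N$ is $\bar\varphi(xN)=\varphi(x)N$, with power function $\bar\pi(xN)\equiv\pi(x)\pmod{|\bar\varphi|}$.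 *)

theory Defs
  imports "HOL-Algebra.Algebra"
begin

definition perm_ord :: "('a, 'b) monoid_scheme \<Rightarrow> ('a \<Rightarrow> 'a) \<Rightarrow> nat" where
  "perm_ord G phi = (LEAST n. 0 < n \<and> (\<forall>x\<in>carrier G. (phi ^^ n) x = x))"

(* phi is a skew-morphism of G with power function pw : A -> Z_n,
   Z_n represented by {0..<n}, n = perm_ord G phi *)
definition skew_morphism :: "('a, 'b) monoid_scheme \<Rightarrow> ('a \<Rightarrow> 'a) \<Rightarrow> ('a \<Rightarrow> nat) \<Rightarrow> bool" where
  "skew_morphism G phi pw \<longleftrightarrow>
     bij_betw phi (carrier G) (carrier G) \<and> phi \<one>\<^bsub>G\<^esub> = \<one>\<^bsub>G\<^esub> \<and>
     (\<forall>x\<in>carrier G. pw x < perm_ord G phi) \<and>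
     (\<forall>x\<in>carrier G. \<forall>y\<in>carrier G.
        phi (x \<otimes>\<^bsub>G\<^esub> y) = phi x \<otimes>\<^bsub>G\<^esub> (phi ^^ pw x) y)"

definition skew_kernel :: "('a, 'b) monoid_scheme \<Rightarrow> ('a \<Rightarrow> 'a) \<Rightarrow> ('a \<Rightarrow> nat) \<Rightarrow> 'a set" where
  "skew_kernel G phi pw = {x \<in> carrier G. pw x = 1 mod perm_ord G phi}"

definition skew_core :: "('a, 'b) monoid_scheme \<Rightarrow> ('a \<Rightarrow> 'a) \<Rightarrow> ('a \<Rightarrow> nat) \<Rightarrow> 'a set" where
  "skew_core G phi pw = (\<Inter>i\<in>{1..perm_ord G phi}. (phi ^^ i) ` skew_kernel G phi pw)"

definition smooth_skew :: "('a, 'b) monoid_scheme \<Rightarrow> ('a \<Rightarrow> 'a) \<Rightarrow> ('a \<Rightarrow> nat) \<Rightarrow> bool" where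
  "smooth_skew G phi pw \<longleftrightarrow> skew_morphism G phi pw \<and>
     (\<forall>x\<in>carrier G. phi x \<in> x <#\<^bsub>G\<^esub> skew_core G phi pw)"

definition is_smooth_skew :: "('a, 'b) monoid_scheme \<Rightarrow> ('a \<Rightarrow> 'a) \<Rightarrow> bool" where
  "is_smooth_skew G phi \<longleftrightarrow> (\<exists>pw. smooth_skew G phi pw)"

(* induced map on A/N: xN |-> phi(x)N (cosets of G Mod N are N #> x) *)
definition induced_skew :: "('a, 'b) monoid_scheme \<Rightarrow> 'a set \<Rightarrow> ('a \<Rightarrow> 'a) \<Rightarrow> 'a set \<Rightarrow> 'a set" where
  "induced_skew G N phi = (\<lambda>C. N #>\<^bsub>G\<^esub> phi (SOME x. x \<in> C))"

definition induced_power :: "('a, 'b) monoid_scheme \<Rightarrow> 'a set \<Rightarrow> ('a \<Rightarrow> 'a) \<Rightarrow> ('a \<Rightarrow> nat) \<Rightarrow> 'a set \<Rightarrow> nat" where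
  "induced_power G N phi pw =
     (\<lambda>C. pw (SOME x. x \<in> C) mod perm_ord (G Mod N) (induced_skew G N phi))"

definition Zn_units :: "nat \<Rightarrow> nat monoid" where
  "Zn_units n = \<lparr>carrier = {k. k < n \<and> coprime k n}, monoid.mult = (\<lambda>a b. (a * b) mod n), monoid.one = 1 mod n\<rparr>"

end

(*
  Everything rests on the identity pi(xy) = sigma(y, pi(x)) mod n, where
  sigma(y, k) = pi(y) + pi(phi y) + ... + pi(phi^(k-1) y); it is forced by applying phi
  to (xy)z = x(yz). The core is phi-invariant and lies in the kernel, so sigma(c, k) = k
  for c in the core and hence pi(xc) = pi(x). Smoothness, phi(x) in x Core, then makes pi
  constant on phi-orbits, so sigma(y, k) = k pi(y) and pi is multiplicative, with values
  that are units since pi(1) = 1. For the quotient, the powers and the conjugates one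
  verifies the skew law directly; smoothness follows because phi(x) lies in x K for a
  phi-invariant subset K of the kernel, and any such K lies in the core.
*)

theory Submission
  imports Defs
begin

lemma bij_betw_funpow_closed: "bij_betw f A A \<Longrightarrow> x \<in> A \<Longrightarrow> (f ^^ k) x \<in> A"
  using bij_betw_funpow bij_betwE by blast

context
  fixes G :: "('a, 'b) monoid_scheme" and f :: "'a \<Rightarrow> 'a"
  assumes finite_carrier: "finite (carrier G)"
    and bij_f: "bij_betw f (carrier G) (carrier G)"
begin

lemma exists_funpow_period: "\<exists>n>0. \<forall>x\<in>carrier G. (f ^^ n) x = x"
proof -
  define p where "p x = (if x \<in> carrier G then f x else x)" for x
  have "bij_betw p (carrier G) (carrier G)"
    using bij_f by (rule bij_betw_cong[THEN iffD1, rotated]) (simp add: p_def)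
  then have "p permutes carrier G"
    by (rule bij_imp_permutes) (simp add: p_def)
  then have "permutation p"
    using finite_carrier permutes_imp_permutation by blast
  then obtain n where n: "p ^^ n = id" "n > 0"
    by (rule permutation_is_nilpotent)
  have "(p ^^ k) x = (f ^^ k) x" if "x \<in> carrier G" for x k
    using that by (induction k) (simp_all add: p_def bij_betw_funpow_closed[OF bij_f])
  then show ?thesis
    using n by (metis id_apply)
qed

lemma perm_ord_pos: "0 < perm_ord G f"
  and funpow_perm_ord: "x \<in> carrier G \<Longrightarrow> (f ^^ perm_ord G f) x = x"
proof -
  have "0 < perm_ord G f \<and> (\<forall>x\<in>carrier G. (f ^^ perm_ord G f) x = x)"
    unfolding perm_ord_def by (rule LeastI_ex) (rule exists_funpow_period)
  then show "0 < perm_ord G f" "x \<in> carrier G \<Longrightarrow> (f ^^ perm_ord G f) x = x"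
    by auto
qed

lemma funpow_mod_perm_ord:
  assumes "x \<in> carrier G"
  shows "(f ^^ a) x = (f ^^ (a mod perm_ord G f)) x"
proof -
  let ?n = "perm_ord G f"
  have "(f ^^ (?n * q)) x = x" for q
    by (induction q) (simp_all add: funpow_add funpow_perm_ord bij_betw_funpow_closed[OF bij_f] assms)
  then show ?thesis
    by (metis comp_apply funpow_add mod_mult_div_eq mult.commute)
qed

lemma perm_ord_dvd_iff: "perm_ord G f dvd k \<longleftrightarrow> (\<forall>x\<in>carrier G. (f ^^ k) x = x)"
proof
  assume "perm_ord G f dvd k"
  then show "\<forall>x\<in>carrier G. (f ^^ k) x = x"
    using funpow_mod_perm_ord by simp
next
  assume period: "\<forall>x\<in>carrier G. (f ^^ k) x = x"
  let ?r = "k mod perm_ord G f"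
  have "\<forall>x\<in>carrier G. (f ^^ ?r) x = x"
    using period funpow_mod_perm_ord by metis
  moreover have "?r < perm_ord G f"
    using perm_ord_pos by simp
  ultimately have "\<not> 0 < ?r"
    using not_less_Least[of ?r "\<lambda>n. 0 < n \<and> (\<forall>x\<in>carrier G. (f ^^ n) x = x)"]
    unfolding perm_ord_def by auto
  then show "perm_ord G f dvd k"
    by (simp add: dvd_eq_mod_eq_0)
qed

lemma funpow_eq_iff_mod_perm_ord:
  "(\<forall>x\<in>carrier G. (f ^^ a) x = (f ^^ b) x) \<longleftrightarrow> a mod perm_ord G f = b mod perm_ord G f"
proof
  have one_sided: "a mod perm_ord G f = b mod perm_ord G f"
    if "b \<le> a" and eq: "\<forall>x\<in>carrier G. (f ^^ a) x = (f ^^ b) x" for a b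
  proof -
    have "(f ^^ (a - b)) y = y" if y: "y \<in> carrier G" for y
    proof -
      obtain z where z: "z \<in> carrier G" "y = (f ^^ b) z"
        using bij_betw_funpow[OF bij_f, of b] y by (metis bij_betw_imp_surj_on imageE)
      have "(f ^^ (a - b)) y = (f ^^ a) z"
        using \<open>b \<le> a\<close> z(2) by (metis comp_apply funpow_add le_add_diff_inverse2)
      then show ?thesis
        using eq z by simp
    qed
    then show ?thesis
      using perm_ord_dvd_iff \<open>b \<le> a\<close> by (simp add: mod_eq_dvd_iff_nat)
  qed
  assume "\<forall>x\<in>carrier G. (f ^^ a) x = (f ^^ b) x"
  then show "a mod perm_ord G f = b mod perm_ord G f"
    using one_sided[of a b] one_sided[of b a] by (cases "b \<le> a") auto
next
  assume "a mod perm_ord G f = b mod perm_ord G f"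
  then show "\<forall>x\<in>carrier G. (f ^^ a) x = (f ^^ b) x"
    using funpow_mod_perm_ord by metis
qed

end

lemma skew_morphism_mod_perm_ordI:
  assumes "finite (carrier G)" and "bij_betw psi (carrier G) (carrier G)"
    and "psi \<one>\<^bsub>G\<^esub> = \<one>\<^bsub>G\<^esub>"
    and "\<And>x y. x \<in> carrier G \<Longrightarrow> y \<in> carrier G \<Longrightarrow>
           psi (x \<otimes>\<^bsub>G\<^esub> y) = psi x \<otimes>\<^bsub>G\<^esub> (psi ^^ q x) y"
  shows "skew_morphism G psi (\<lambda>x. q x mod perm_ord G psi)"
  unfolding skew_morphism_def
  using assms perm_ord_pos funpow_mod_perm_ord by (metis mod_less_divisor)

locale finite_skew_morphism = group G for G :: "('a, 'b) monoid_scheme" (structure) +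
  fixes phi :: "'a \<Rightarrow> 'a" and pw :: "'a \<Rightarrow> nat"
  assumes finite_carrier: "finite (carrier G)"
    and skew_morphism: "skew_morphism G phi pw"
begin

abbreviation "phi_ord \<equiv> perm_ord G phi"
abbreviation "Ker \<equiv> skew_kernel G phi pw"
abbreviation "Core \<equiv> skew_core G phi pw"

lemma bij_phi: "bij_betw phi (carrier G) (carrier G)"
  and phi_one [simp]: "phi \<one> = \<one>"
  and power_less: "x \<in> carrier G \<Longrightarrow> pw x < phi_ord"
  and phi_mult: "x \<in> carrier G \<Longrightarrow> y \<in> carrier G \<Longrightarrow> phi (x \<otimes> y) = phi x \<otimes> (phi ^^ pw x) y"
  using skew_morphism unfolding skew_morphism_def by blast+

lemma funpow_phi_closed [simp]: "x \<in> carrier G \<Longrightarrow> (phi ^^ k) x \<in> carrier G"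
  using bij_betw_funpow_closed[OF bij_phi] .

lemma phi_closed [simp]: "x \<in> carrier G \<Longrightarrow> phi x \<in> carrier G"
  using funpow_phi_closed[of x 1] by simp

lemma phi_ord_pos: "0 < phi_ord"
  using perm_ord_pos[OF finite_carrier bij_phi] .

lemma funpow_phi_eq_iff:
  "(\<forall>x\<in>carrier G. (phi ^^ a) x = (phi ^^ b) x) \<longleftrightarrow> a mod phi_ord = b mod phi_ord"
  using funpow_eq_iff_mod_perm_ord[OF finite_carrier bij_phi] .

lemma kernel_iff: "c \<in> Ker \<longleftrightarrow> c \<in> carrier G \<and> pw c = 1 mod phi_ord"
  by (simp add: skew_kernel_def)

definition power_sum :: "'a \<Rightarrow> nat \<Rightarrow> nat" where
  "power_sum x k = (\<Sum>i<k. pw ((phi ^^ i) x))"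

lemma funpow_phi_mult:
  assumes "x \<in> carrier G" and "y \<in> carrier G"
  shows "(phi ^^ k) (x \<otimes> y) = (phi ^^ k) x \<otimes> (phi ^^ power_sum x k) y"
proof (induction k)
  case 0
  then show ?case by (simp add: power_sum_def)
next
  case (Suc k)
  have "(phi ^^ Suc k) (x \<otimes> y) = phi ((phi ^^ k) x \<otimes> (phi ^^ power_sum x k) y)"
    using Suc by simp
  also have "\<dots> = (phi ^^ Suc k) x \<otimes> (phi ^^ pw ((phi ^^ k) x)) ((phi ^^ power_sum x k) y)"
    using assms by (simp add: phi_mult)
  also have "\<dots> = (phi ^^ Suc k) x \<otimes> (phi ^^ power_sum x (Suc k)) y"
    by (simp add: power_sum_def funpow_add add.commute)
  finally show ?case .
qed

lemma power_mult_eq_power_sum: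
  assumes x: "x \<in> carrier G" and y: "y \<in> carrier G"
  shows "pw (x \<otimes> y) = power_sum y (pw x) mod phi_ord"
proof -
  have "(phi ^^ pw (x \<otimes> y)) z = (phi ^^ power_sum y (pw x)) z" if z: "z \<in> carrier G" for z
  proof -
    let ?a = "phi x \<otimes> (phi ^^ pw x) y"
    have a: "?a \<in> carrier G"
      using x y by simp
    have "?a \<otimes> (phi ^^ pw (x \<otimes> y)) z = phi ((x \<otimes> y) \<otimes> z)"
      using x y z by (simp add: phi_mult)
    also have "\<dots> = phi (x \<otimes> (y \<otimes> z))"
      using x y z by (simp add: m_assoc)
    also have "\<dots> = phi x \<otimes> ((phi ^^ pw x) y \<otimes> (phi ^^ power_sum y (pw x)) z)"
      using x y z by (simp add: phi_mult funpow_phi_mult)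
    also have "\<dots> = ?a \<otimes> (phi ^^ power_sum y (pw x)) z"
      using x y z by (simp add: m_assoc)
    finally show ?thesis
      using l_cancel[OF _ funpow_phi_closed[OF z] funpow_phi_closed[OF z] a] by blast
  qed
  then have "pw (x \<otimes> y) mod phi_ord = power_sum y (pw x) mod phi_ord"
    using funpow_phi_eq_iff by blast
  then show ?thesis
    using power_less[of "x \<otimes> y"] x y by simp
qed

lemma power_one: "pw \<one> = 1 mod phi_ord"
proof -
  have "\<forall>y\<in>carrier G. (phi ^^ pw \<one>) y = (phi ^^ 1) y"
    using phi_mult[of \<one>] by simp
  then have "pw \<one> mod phi_ord = 1 mod phi_ord"
    using funpow_phi_eq_iff by blast
  then show ?thesis
    using power_less[of \<one>] by simp
qed

lemma invariant_subset_kernel_imp_subset_core: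
  assumes "K \<subseteq> Ker" and "phi ` K \<subseteq> K"
  shows "K \<subseteq> Core"
proof
  fix c assume c: "c \<in> K"
  have "c \<in> (phi ^^ i) ` Ker" if "i \<in> {1..phi_ord}" for i
  proof
    have "(phi ^^ k) c \<in> K" for k
      using c assms(2) by (induction k) auto
    then show "(phi ^^ (phi_ord - i)) c \<in> Ker"
      using assms(1) by blast
    have "(phi ^^ i) ((phi ^^ (phi_ord - i)) c) = (phi ^^ phi_ord) c"
      using that by (metis comp_apply funpow_add le_add_diff_inverse atLeastAtMost_iff)
    then show "c = (phi ^^ i) ((phi ^^ (phi_ord - i)) c)"
      using c assms(1) funpow_perm_ord[OF finite_carrier bij_phi] by (auto simp: kernel_iff)
  qed
  then show "c \<in> Core"
    by (simp add: skew_core_def)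
qed

lemma core_subset_kernel: "Core \<subseteq> Ker"
proof
  fix c assume "c \<in> Core"
  then have "c \<in> (phi ^^ phi_ord) ` Ker"
    using phi_ord_pos by (simp add: skew_core_def)
  then show "c \<in> Ker"
    using funpow_perm_ord[OF finite_carrier bij_phi] by (auto simp: kernel_iff)
qed

lemma phi_core_closed: "phi ` Core \<subseteq> Core"
proof clarify
  fix c assume c: "c \<in> Core"
  have "phi c \<in> (phi ^^ i) ` Ker" if i: "i \<in> {1..phi_ord}" for i
  proof (cases "i = 1")
    case True
    then show ?thesis
      using c core_subset_kernel by auto
  next
    case False
    then have "i - 1 \<in> {1..phi_ord}"
      using i by auto
    then have "c \<in> (phi ^^ (i - 1)) ` Ker"
      using c unfolding skew_core_def by blast
    then obtain k where k: "k \<in> Ker" "c = (phi ^^ (i - 1)) k"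
      by blast
    have "Suc (i - 1) = i"
      using i by auto
    then have "phi c = (phi ^^ i) k"
      using k(2) by (metis comp_apply funpow.simps(2))
    then show ?thesis
      using k(1) by blast
  qed
  then show "phi c \<in> Core"
    by (simp add: skew_core_def)
qed

lemma funpow_phi_core_closed: "c \<in> Core \<Longrightarrow> (phi ^^ k) c \<in> Core"
  using phi_core_closed by (induction k) auto

text \<open>All \<open>\<phi>\<^sup>i(c)\<close> lie in the kernel, so \<open>\<sigma>(c, k) \<equiv> k\<close>.\<close>

lemma power_mult_core:
  assumes x: "x \<in> carrier G" and c: "c \<in> Core"
  shows "pw (x \<otimes> c) = pw x"
proof -
  have c_carrier: "c \<in> carrier G"
    using c core_subset_kernel by (auto simp: kernel_iff)
  have "(phi ^^ i) c \<in> Ker" for i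
    using funpow_phi_core_closed[OF c] core_subset_kernel by blast
  then have orbit_power: "pw ((phi ^^ i) c) mod phi_ord = 1 mod phi_ord" for i
    by (simp add: kernel_iff)
  have "power_sum c k mod phi_ord = k mod phi_ord" for k
  proof -
    have "power_sum c k mod phi_ord = (\<Sum>i<k. pw ((phi ^^ i) c) mod phi_ord) mod phi_ord"
      unfolding power_sum_def by (rule mod_sum_eq[symmetric])
    also have "\<dots> = (k * (1 mod phi_ord)) mod phi_ord"
      using orbit_power by simp
    also have "\<dots> = k mod phi_ord"
      by (metis mod_mult_right_eq mult.right_neutral)
    finally show ?thesis .
  qed
  then show ?thesis
    using power_mult_eq_power_sum[OF x c_carrier] power_less[OF x] by simp
qed

lemma smooth_skewI:
  assumes "K \<subseteq> Ker" and "phi ` K \<subseteq> K"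
    and "\<And>x. x \<in> carrier G \<Longrightarrow> \<exists>c\<in>K. phi x = x \<otimes> c"
  shows "smooth_skew G phi pw"
proof -
  have "phi x \<in> x <# Core" if x: "x \<in> carrier G" for x
  proof -
    obtain c where "c \<in> K" "phi x = x \<otimes> c"
      using assms(3)[OF x] by blast
    then show ?thesis
      using invariant_subset_kernel_imp_subset_core[OF assms(1,2)] unfolding l_coset_def by blast
  qed
  then show ?thesis
    using skew_morphism by (simp add: smooth_skew_def)
qed

end

locale conjugate_skew_morphism = finite_skew_morphism +
  fixes gamma :: "'a \<Rightarrow> 'a"
  assumes gamma_iso: "gamma \<in> iso G G"
begin

abbreviation "gamma_inv \<equiv> inv_into (carrier G) gamma"

definition phi_conj :: "'a \<Rightarrow> 'a" where
  "phi_conj x = gamma_inv (phi (gamma x))"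

lemma bij_gamma: "bij_betw gamma (carrier G) (carrier G)"
  and bij_gamma_inv: "bij_betw gamma_inv (carrier G) (carrier G)"
  using gamma_iso iso_set_sym[OF gamma_iso] by (simp_all add: iso_def)

lemma gamma_closed [simp]: "x \<in> carrier G \<Longrightarrow> gamma x \<in> carrier G"
  and gamma_inv_closed [simp]: "x \<in> carrier G \<Longrightarrow> gamma_inv x \<in> carrier G"
  and gamma_gamma_inv [simp]: "x \<in> carrier G \<Longrightarrow> gamma (gamma_inv x) = x"
  and gamma_inv_gamma [simp]: "x \<in> carrier G \<Longrightarrow> gamma_inv (gamma x) = x"
  using bij_betwE[OF bij_gamma] bij_betwE[OF bij_gamma_inv]
    bij_betw_inv_into_right[OF bij_gamma] bij_betw_inv_into_left[OF bij_gamma] by blast+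

lemma gamma_mult [simp]: "x \<in> carrier G \<Longrightarrow> y \<in> carrier G \<Longrightarrow> gamma (x \<otimes> y) = gamma x \<otimes> gamma y"
  and gamma_inv_mult [simp]:
    "x \<in> carrier G \<Longrightarrow> y \<in> carrier G \<Longrightarrow> gamma_inv (x \<otimes> y) = gamma_inv x \<otimes> gamma_inv y"
  using gamma_iso iso_set_sym[OF gamma_iso] by (simp_all add: iso_def hom_mult)

lemma funpow_phi_conj: "x \<in> carrier G \<Longrightarrow> (phi_conj ^^ k) x = gamma_inv ((phi ^^ k) (gamma x))"
  by (induction k) (simp_all add: phi_conj_def)

lemma bij_phi_conj: "bij_betw phi_conj (carrier G) (carrier G)"
  unfolding phi_conj_def[abs_def]
  using bij_betw_trans[OF bij_gamma bij_betw_trans[OF bij_phi bij_gamma_inv]]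
  by (simp add: comp_def)

lemma phi_conj_ord_dvd: "perm_ord G phi_conj dvd phi_ord"
  using perm_ord_dvd_iff[OF finite_carrier bij_phi_conj] funpow_perm_ord[OF finite_carrier bij_phi]
  by (simp add: funpow_phi_conj)

lemma skew_morphism_phi_conj:
  "skew_morphism G phi_conj (\<lambda>x. pw (gamma x) mod perm_ord G phi_conj)"
proof (rule skew_morphism_mod_perm_ordI[OF finite_carrier bij_phi_conj])
  have "gamma \<one> = \<one>"
    using hom_one[of gamma G G] gamma_iso is_group by (simp add: iso_def)
  then show "phi_conj \<one> = \<one>"
    using gamma_inv_gamma[of \<one>] by (simp add: phi_conj_def)
  fix x y assume "x \<in> carrier G" "y \<in> carrier G"
  then show "phi_conj (x \<otimes> y) = phi_conj x \<otimes> (phi_conj ^^ pw (gamma x)) y"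
    by (simp add: phi_conj_def phi_mult funpow_phi_conj)
qed

end

locale finite_smooth_skew_morphism = finite_skew_morphism +
  assumes smooth: "\<forall>x\<in>carrier G. phi x \<in> x <# skew_core G phi pw"
begin

lemma phi_in_core_coset:
  assumes "x \<in> carrier G"
  obtains c where "c \<in> Core" and "phi x = x \<otimes> c"
  using smooth assms unfolding l_coset_def by blast

lemma power_phi: "x \<in> carrier G \<Longrightarrow> pw (phi x) = pw x"
  by (metis phi_in_core_coset power_mult_core)

lemma power_funpow_phi: "x \<in> carrier G \<Longrightarrow> pw ((phi ^^ k) x) = pw x"
  by (induction k) (simp_all add: power_phi)

lemma power_sum_eq: "x \<in> carrier G \<Longrightarrow> power_sum x k = k * pw x"
  by (simp add: power_sum_def power_funpow_phi)

lemma power_mult: "x \<in> carrier G \<Longrightarrow> y \<in> carrier G \<Longrightarrow> pw (x \<otimes> y) = pw x * pw y mod phi_ord"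
  by (simp add: power_mult_eq_power_sum power_sum_eq)

lemma power_coprime:
  assumes x: "x \<in> carrier G"
  shows "coprime (pw x) phi_ord"
proof -
  have "pw x * pw (inv x) mod phi_ord = 1 mod phi_ord"
    using power_mult[of x "inv x"] x power_one by simp
  then have "coprime (pw x * pw (inv x)) phi_ord"
    by (metis coprime_1_left coprime_mod_left_iff phi_ord_pos not_gr0)
  then show ?thesis
    by simp
qed

lemma power_hom:
  "pw \<in> hom G (Zn_units phi_ord) \<and> kernel G (Zn_units phi_ord) pw = Ker"
  unfolding hom_def kernel_def skew_kernel_def Zn_units_def
  using power_less power_coprime power_mult by auto

lemma power_mult_kernel:
  assumes "x \<in> carrier G" and "c \<in> Ker"
  shows "pw (x \<otimes> c) = pw x"
proof -
  have "pw (x \<otimes> c) = pw x * (1 mod phi_ord) mod phi_ord"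
    using assms power_mult by (simp add: kernel_iff)
  also have "\<dots> = pw x mod phi_ord"
    by (metis mod_mult_right_eq mult.right_neutral)
  finally show ?thesis
    using power_less[OF assms(1)] by simp
qed

lemma phi_kernel_closed: "phi ` Ker \<subseteq> Ker"
  using power_phi by (auto simp: kernel_iff)

lemma funpow_phi_kernel_closed: "c \<in> Ker \<Longrightarrow> (phi ^^ k) c \<in> Ker"
  using phi_kernel_closed by (induction k) auto

lemma funpow_phi_in_kernel_coset:
  assumes x: "x \<in> carrier G"
  shows "\<exists>c\<in>Ker. (phi ^^ k) x = x \<otimes> c"
proof
  let ?c = "inv x \<otimes> (phi ^^ k) x"
  have "pw ?c = pw (inv x) * pw x mod phi_ord"
    using x by (simp add: power_mult power_funpow_phi)
  also have "\<dots> = 1 mod phi_ord"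
    using x power_mult[of "inv x" x] power_one by simp
  finally show "?c \<in> Ker"
    using x by (simp add: kernel_iff)
  show "(phi ^^ k) x = x \<otimes> ?c"
    using x by (simp add: m_assoc[symmetric])
qed

lemma is_smooth_skew_funpow: "is_smooth_skew G (phi ^^ k)"
proof -
  let ?psi = "phi ^^ k"
  let ?m = "perm_ord G ?psi"
  have bij: "bij_betw ?psi (carrier G) (carrier G)"
    using bij_betw_funpow[OF bij_phi] .
  have "skew_morphism G ?psi (\<lambda>x. pw x mod ?m)"
  proof (rule skew_morphism_mod_perm_ordI[OF finite_carrier bij])
    show "?psi \<one> = \<one>"
      by (induction k) auto
    fix x y assume "x \<in> carrier G" "y \<in> carrier G"
    then show "?psi (x \<otimes> y) = ?psi x \<otimes> (?psi ^^ pw x) y"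
      by (simp add: funpow_phi_mult power_sum_eq funpow_mult)
  qed
  then interpret psi: finite_skew_morphism G ?psi "\<lambda>x. pw x mod ?m"
    using finite_carrier by unfold_locales
  have "\<forall>x\<in>carrier G. (phi ^^ (k * phi_ord)) x = x"
    using perm_ord_dvd_iff[OF finite_carrier bij_phi, of "k * phi_ord"] by simp
  then have "?m dvd phi_ord"
    using perm_ord_dvd_iff[OF finite_carrier bij] by (simp add: funpow_mult)
  then have "Ker \<subseteq> psi.Ker"
    by (auto simp: kernel_iff psi.kernel_iff mod_mod_cancel)
  then have "smooth_skew G ?psi (\<lambda>x. pw x mod ?m)"
    using funpow_phi_kernel_closed funpow_phi_in_kernel_coset by (intro psi.smooth_skewI) auto
  then show ?thesis
    unfolding is_smooth_skew_def by blast
qed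

lemma is_smooth_skew_conjugate:
  assumes gamma: "gamma \<in> iso G G"
  shows "is_smooth_skew G (\<lambda>x. inv_into (carrier G) gamma (phi (gamma x)))"
proof -
  interpret conjugate_skew_morphism G phi pw gamma
    by (intro conjugate_skew_morphism.intro finite_skew_morphism_axioms
        conjugate_skew_morphism_axioms.intro gamma)
  let ?K = "{x \<in> carrier G. gamma x \<in> Ker}"
  let ?m = "perm_ord G phi_conj"
  interpret psi: finite_skew_morphism G phi_conj "\<lambda>x. pw (gamma x) mod ?m"
    using skew_morphism_phi_conj finite_carrier by unfold_locales
  have "?K \<subseteq> psi.Ker"
  proof clarify
    fix c assume c: "c \<in> carrier G" "gamma c \<in> Ker"
    then have "pw (gamma c) = 1 mod phi_ord"
      using kernel_iff by blast
    then have "pw (gamma c) mod ?m = 1 mod ?m"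
      using phi_conj_ord_dvd by (metis mod_mod_cancel)
    then show "c \<in> psi.Ker"
      using c(1) psi.kernel_iff by blast
  qed
  moreover have "phi_conj ` ?K \<subseteq> ?K"
    using phi_kernel_closed by (auto simp: phi_conj_def)
  moreover have "\<exists>c\<in>?K. phi_conj x = x \<otimes> c" if x: "x \<in> carrier G" for x
  proof -
    obtain c where c: "c \<in> Ker" "phi (gamma x) = gamma x \<otimes> c"
      using funpow_phi_in_kernel_coset[of "gamma x" 1] x by auto
    have c_carrier: "c \<in> carrier G"
      using c(1) kernel_iff by blast
    have "phi_conj x = x \<otimes> gamma_inv c"
      using x c(2) c_carrier by (simp add: phi_conj_def)
    moreover have "gamma_inv c \<in> ?K"
      using c(1) c_carrier by simp
    ultimately show ?thesis
      by blast
  qed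
  ultimately have "smooth_skew G phi_conj (\<lambda>x. pw (gamma x) mod ?m)"
    by (rule psi.smooth_skewI)
  then show ?thesis
    unfolding is_smooth_skew_def phi_conj_def[abs_def] by blast
qed

end

lemma (in group) rcosets_some_repr:
  assumes "subgroup H G" and "C \<in> rcosets H"
  shows "(SOME x. x \<in> C) \<in> carrier G \<and> C = H #> (SOME x. x \<in> C)"
proof -
  obtain a where a: "a \<in> carrier G" "C = H #> a"
    using assms(2) unfolding RCOSETS_def by blast
  then have "(SOME x. x \<in> C) \<in> C"
    using rcos_self[OF a(1) assms(1)] by (metis someI)
  then show ?thesis
    using a assms(1) r_coset_subset_G[OF subgroup.subset[OF assms(1)]]
      repr_independence[OF _ a(1) assms(1)] by blast
qed

locale skew_invariant_normal = finite_skew_morphism + normal N G for N +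
  assumes phi_normal_closed: "phi ` N \<subseteq> N"
begin

abbreviation "induced \<equiv> induced_skew G N phi"
abbreviation "induced_pw \<equiv> induced_power G N phi pw"

lemma rcos_mult_normal_left: "x \<in> carrier G \<Longrightarrow> h \<in> N \<Longrightarrow> N #> (h \<otimes> x) = N #> x"
  by (metis rcos_self coset_mult_assoc rcos_const is_group subgroup_axioms subset subsetD)

lemma rcos_mult_normal_right: "x \<in> carrier G \<Longrightarrow> h \<in> N \<Longrightarrow> N #> (x \<otimes> h) = N #> x"
  using rcos_mult_normal_left[of x "x \<otimes> h \<otimes> inv x"] inv_op_closed2
  by (simp add: m_assoc subset[THEN subsetD])

lemma rcos_phi_cong:
  assumes x: "x \<in> carrier G" and x': "x' \<in> N #> x"
  shows "N #> phi x' = N #> phi x"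
proof -
  obtain h where h: "h \<in> N" "x' = h \<otimes> x"
    using x' unfolding r_coset_def by blast
  let ?h = "inv x \<otimes> h \<otimes> x"
  have h': "?h \<in> N" "?h \<in> carrier G"
    using inv_op_closed1[OF x h(1)] subset by auto
  have "(phi ^^ k) ?h \<in> N" for k
    using h'(1) phi_normal_closed by (induction k) auto
  moreover have "x' = x \<otimes> ?h"
    using x h subset by (auto simp: m_assoc[symmetric])
  ultimately show ?thesis
    using x h' by (simp add: phi_mult rcos_mult_normal_right)
qed

lemma induced_rcos: "x \<in> carrier G \<Longrightarrow> induced (N #> x) = N #> phi x"
  unfolding induced_skew_def
  using rcosets_some_repr[OF subgroup_axioms rcosetsI[OF subset]] rcos_phi_cong
  by (metis repr_independenceD subgroup_axioms)

lemma funpow_induced_rcos: "x \<in> carrier G \<Longrightarrow> (induced ^^ k) (N #> x) = N #> (phi ^^ k) x"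
  by (induction k) (simp_all add: induced_rcos)

lemma finite_quotient: "finite (carrier (G Mod N))"
  using finite_carrier by (simp add: carrier_FactGroup)

lemma bij_induced: "bij_betw induced (carrier (G Mod N)) (carrier (G Mod N))"
proof -
  have "induced ` carrier (G Mod N) = carrier (G Mod N)"
  proof -
    have "induced ` carrier (G Mod N) = (\<lambda>x. N #> phi x) ` carrier G"
      unfolding carrier_FactGroup image_image by (rule image_cong) (simp_all add: induced_rcos)
    also have "\<dots> = (\<lambda>x. N #> x) ` phi ` carrier G"
      by (simp add: image_image)
    finally show ?thesis
      using bij_phi by (simp add: carrier_FactGroup bij_betw_def)
  qed
  then show ?thesis
    using finite_surj_inj[OF finite_quotient] by (simp add: bij_betw_def)
qed

lemma skew_morphism_induced: "skew_morphism (G Mod N) induced induced_pw"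
  unfolding induced_power_def
proof (rule skew_morphism_mod_perm_ordI[OF finite_quotient bij_induced])
  show "induced \<one>\<^bsub>G Mod N\<^esub> = \<one>\<^bsub>G Mod N\<^esub>"
    using induced_rcos[of \<one>] subset by simp
  fix C D assume C: "C \<in> carrier (G Mod N)" and D: "D \<in> carrier (G Mod N)"
  define x where "x = (SOME x. x \<in> C)"
  have "C \<in> rcosets N"
    using C by (simp add: FactGroup_def)
  then have x: "x \<in> carrier G" "C = N #> x"
    using rcosets_some_repr[OF subgroup_axioms] unfolding x_def by blast+
  obtain y where y: "y \<in> carrier G" "D = N #> y"
    using D unfolding carrier_FactGroup by blast
  have "induced (C \<otimes>\<^bsub>G Mod N\<^esub> D) = N #> phi (x \<otimes> y)"
    using x y by (simp add: rcos_sum induced_rcos)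
  also have "\<dots> = (N #> phi x) <#> (N #> (phi ^^ pw x) y)"
    using x y by (simp add: phi_mult rcos_sum)
  also have "\<dots> = induced C \<otimes>\<^bsub>G Mod N\<^esub> (induced ^^ pw x) D"
    using x y by (simp add: induced_rcos funpow_induced_rcos)
  finally show "induced (C \<otimes>\<^bsub>G Mod N\<^esub> D) =
      induced C \<otimes>\<^bsub>G Mod N\<^esub> (induced ^^ pw (SOME x. x \<in> C)) D"
    unfolding x_def .
qed

text \<open>For \<open>h \<in> N\<close>, reducing \<open>\<phi>(hy) = \<phi>(h) \<phi>^\<pi>(h)(y)\<close> modulo \<open>N\<close> shows that \<open>\<bar>\<phi>\<close>^\<pi>(h) and \<open>\<bar>\<phi>\<close> agree on \<open>A/N\<close>.\<close>

lemma power_normal_mod_induced_ord: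
  assumes h: "h \<in> N"
  shows "pw h mod perm_ord (G Mod N) induced = 1 mod perm_ord (G Mod N) induced"
proof -
  have "(induced ^^ pw h) (N #> y) = (induced ^^ 1) (N #> y)" if y: "y \<in> carrier G" for y
  proof -
    have "h \<in> carrier G" "phi h \<in> N"
      using h subset phi_normal_closed by auto
    then have "N #> (phi ^^ pw h) y = N #> phi (h \<otimes> y)"
      using y by (simp add: phi_mult rcos_mult_normal_left)
    also have "\<dots> = N #> phi y"
      using rcos_phi_cong[OF y rcosI[OF h subset y]] .
    finally show ?thesis
      using y by (simp add: funpow_induced_rcos induced_rcos)
  qed
  then have "\<forall>C\<in>carrier (G Mod N). (induced ^^ pw h) C = (induced ^^ 1) C"
    unfolding carrier_FactGroup by blast
  then show ?thesis
    using funpow_eq_iff_mod_perm_ord[OF finite_quotient bij_induced] by blast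
qed

end

locale smooth_invariant_normal = skew_invariant_normal + finite_smooth_skew_morphism
begin

lemma induced_in_kernel_coset:
  assumes "C \<in> carrier (G Mod N)"
  obtains x c where "x \<in> carrier G" "C = N #> x" "c \<in> Ker" "induced C = N #> (x \<otimes> c)"
proof -
  obtain x where x: "x \<in> carrier G" "C = N #> x"
    using assms by (auto simp: carrier_FactGroup)
  moreover obtain c where "c \<in> Ker" "phi x = x \<otimes> c"
    using funpow_phi_in_kernel_coset[OF x(1), of 1] by auto
  ultimately show ?thesis
    using that by (simp add: induced_rcos)
qed

lemma smooth_skew_induced: "smooth_skew (G Mod N) induced induced_pw"
proof -
  interpret Q: finite_skew_morphism "G Mod N" induced induced_pw
    using factorgroup_is_group finite_quotient skew_morphism_induced
    by (simp add: finite_skew_morphism_def finite_skew_morphism_axioms_def)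
  let ?K = "(\<lambda>c. N #> c) ` Ker"
  have "?K \<subseteq> Q.Ker"
  proof clarify
    fix c assume c: "c \<in> Ker"
    then have c_carrier: "c \<in> carrier G"
      by (simp add: kernel_iff)
    let ?r = "SOME x. x \<in> N #> c"
    have "?r \<in> N #> c"
      using rcosets_some_repr[OF subgroup_axioms rcosetsI[OF subset c_carrier]]
        repr_independenceD[OF subgroup_axioms] by metis
    then obtain h where h: "h \<in> N" "?r = h \<otimes> c"
      unfolding r_coset_def by blast
    then have "pw ?r = pw h"
      using c subset power_mult_kernel by auto
    then have "induced_pw (N #> c) = 1 mod perm_ord (G Mod N) induced"
      using power_normal_mod_induced_ord[OF h(1)] by (simp add: induced_power_def)
    then show "N #> c \<in> Q.Ker"
      using c_carrier by (simp add: Q.kernel_iff carrier_FactGroup)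
  qed
  moreover have "induced ` ?K \<subseteq> ?K"
    using phi_kernel_closed by (auto simp: kernel_iff induced_rcos)
  moreover have "\<exists>D\<in>?K. induced C = C \<otimes>\<^bsub>G Mod N\<^esub> D" if C: "C \<in> carrier (G Mod N)" for C
  proof -
    obtain x c where "x \<in> carrier G" "C = N #> x" "c \<in> Ker" "induced C = N #> (x \<otimes> c)"
      using induced_in_kernel_coset[OF C] .
    then show ?thesis
      by (auto simp: rcos_sum kernel_iff)
  qed
  ultimately show ?thesis
    by (rule Q.smooth_skewI)
qed

lemma induced_kernel_eq_id:
  assumes "N = Ker" and "C \<in> carrier (G Mod N)"
  shows "induced C = C"
proof -
  obtain x c where "x \<in> carrier G" "C = N #> x" "c \<in> Ker" "induced C = N #> (x \<otimes> c)"
    using induced_in_kernel_coset[OF assms(2)] .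
  then show ?thesis
    using assms(1) rcos_mult_normal_right by simp
qed

end

theorem theorem4:
  fixes G :: "('a, 'b) monoid_scheme" and phi :: "'a \<Rightarrow> 'a" and pw :: "'a \<Rightarrow> nat"
  assumes "group G" and "finite (carrier G)" and "smooth_skew G phi pw"
  shows "(pw \<in> hom G (Zn_units (perm_ord G phi)) \<and>
          kernel G (Zn_units (perm_ord G phi)) pw = skew_kernel G phi pw)
       \<and> (\<forall>N. N \<lhd> G \<and> phi ` N = N \<longrightarrow>
            smooth_skew (G Mod N) (induced_skew G N phi) (induced_power G N phi pw) \<and>
            (N = skew_kernel G phi pw \<longrightarrow>
               (\<forall>C\<in>carrier (G Mod N). induced_skew G N phi C = C)))
       \<and> (\<forall>k::nat. 0 < k \<longrightarrow> is_smooth_skew G (phi ^^ k))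
       \<and> (\<forall>gamma\<in>iso G G. is_smooth_skew G (\<lambda>x. inv_into (carrier G) gamma (phi (gamma x))))"
proof -
  interpret finite_smooth_skew_morphism G phi pw
    using assms by (simp add: smooth_skew_def finite_smooth_skew_morphism_def
        finite_smooth_skew_morphism_axioms_def finite_skew_morphism_def finite_skew_morphism_axioms_def)
  have "smooth_skew (G Mod N) (induced_skew G N phi) (induced_power G N phi pw) \<and>
      (N = skew_kernel G phi pw \<longrightarrow> (\<forall>C\<in>carrier (G Mod N). induced_skew G N phi C = C))"
    if "N \<lhd> G" and "phi ` N = N" for N
  proof -
    interpret smooth_invariant_normal G phi pw N
      using that by (intro smooth_invariant_normal.intro skew_invariant_normal.intro
          skew_invariant_normal_axioms.intro finite_skew_morphism_axioms
          finite_smooth_skew_morphism_axioms) auto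
    show ?thesis
      using smooth_skew_induced induced_kernel_eq_id by blast
  qed
  then show ?thesis
    using power_hom is_smooth_skew_funpow is_smooth_skew_conjugate by blast
qed

end
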